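(* Let $K_1\subset\mathbb C$ and $K_2\subset\mathbb C^m$ be compact sets. Under the identification $F\mapsto(x\mapsto F(x,\cdot))$ of $C(K_1\times K_2)$ with $C(K_1,C(K_2))$, we have \[ A_D(K_1\times K_2)\subset A\big(K_1,A_D(K_2)\big); \] that is, for every $F\in A_D(K_1\times K_2)$ and every $x\in K_1$ the function $F(x,\cdot)$ belongs to $A_D(K_2)$, and the map $x\mapsto F(x,\cdot)$ from $K_1$ to the Banach space $A_D(K_2)$ is continuous on $K_1$ and holomorphic on $K_1^\circ$.
   Context: For a compact $K\subset\mathbb C^n$, $A_D(K)$ is the set of continuous functions $f:K\to\mathbb C$ such that for every open disc $D\subset\mathbb C$ and every injective holomorphic mapping $\phi:D\to\mathbb C^n$ with $\phi(D)\subset K$, $f\circ\phi$ is holomorphic on $D$; it is a Banach space under the supremum norm. For a planar compact $K_1$ and a Banach space $W$, $A(K_1,W)$ is the space of continuous maps $K_1\to W$ that are holomorphic (as $W$-valued functions) on the interior $K_1^\circ$. *)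

theory Defs
  imports "HOL-Complex_Analysis.Complex_Analysis"
begin

text \<open>Points of C^n are vectors complex^'n (index type 'n finite, n = CARD('n)).
A map phi from an open disc to C^n is holomorphic iff each coordinate is.\<close>

definition holo_map_on :: "(complex \<Rightarrow> complex^'n) \<Rightarrow> complex set \<Rightarrow> bool" where
  "holo_map_on phi D \<longleftrightarrow> (\<forall>i. (\<lambda>z. phi z $ i) holomorphic_on D)"

definition AD :: "(complex^'n) set \<Rightarrow> (complex^'n \<Rightarrow> complex) set" where
  "AD K = {f. continuous_on K f \<and>
     (\<forall>c r phi. r > 0 \<longrightarrow> holo_map_on phi (ball c r) \<longrightarrow> inj_on phi (ball c r)
        \<longrightarrow> phi ` ball c r \<subseteq> K \<longrightarrow> (f \<circ> phi) holomorphic_on ball c r)}"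

text \<open>C x C^m is identified with C^(1+m) via the index type 'm option:
coordinate None is the first (planar) coordinate.\<close>

definition pt :: "complex \<Rightarrow> complex^'m \<Rightarrow> complex^('m option)" where
  "pt x w = (\<chi> i. case i of None \<Rightarrow> x | Some j \<Rightarrow> w $ j)"

definition prodset :: "complex set \<Rightarrow> (complex^'m) set \<Rightarrow> (complex^('m option)) set" where
  "prodset K1 K2 = {pt x w | x w. x \<in> K1 \<and> w \<in> K2}"

end

theory Submission
  imports Defs
begin

text \<open>Restricting \<open>F\<close> to slices \<open>{x} \<times> K2\<close> and fibres \<open>K1 \<times> {w}\<close> preserves
  holomorphy along injective holomorphic discs, and uniform continuity of \<open>F\<close> on the compact
  product gives continuity of \<open>x \<mapsto> F(x,\<cdot>)\<close> in the sup norm. At an interior point \<open>x0\<close> of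
  \<open>K1\<close> the fibres are holomorphic on a fixed disc and bounded by \<open>sup |F|\<close>, so Cauchy's
  estimates bound their second derivatives uniformly in \<open>w\<close>; by Taylor's formula the
  difference quotients then converge uniformly, and their limit lies in \<open>AD K2\<close> because
  \<open>AD K2\<close> is closed under uniform limits (Weierstrass).\<close>

lemma pt_None [simp]: "pt x w $ None = x"
  and pt_Some [simp]: "pt x w $ Some j = w $ j"
  by (simp_all add: pt_def)

lemma pt_eq_iff [simp]: "pt x w = pt y v \<longleftrightarrow> x = y \<and> w = v"
  by (metis pt_None pt_Some vec_eq_iff)

lemma pt_in_prodset [intro]: "x \<in> K1 \<Longrightarrow> w \<in> K2 \<Longrightarrow> pt x w \<in> prodset K1 K2"
  unfolding prodset_def by blast

lemma dist_pt_same_fibre: "dist (pt x w) (pt y w) = dist x y"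
proof -
  have "(\<Sum>i\<in>UNIV. (norm ((pt x w - pt y w) $ i))\<^sup>2) = (\<Sum>i\<in>{None}. (norm ((pt x w - pt y w) $ i))\<^sup>2)"
    by (rule sum.mono_neutral_right) (auto, metis option.exhaust pt_Some)
  then show ?thesis
    by (simp add: dist_norm norm_vec_def L2_set_def)
qed

lemma continuous_on_pt [continuous_intros]:
  fixes b :: "'s::topological_space \<Rightarrow> complex^'m"
  assumes "continuous_on S a" and "continuous_on S b"
  shows "continuous_on S (\<lambda>z. pt (a z) (b z))"
  unfolding pt_def
proof (rule continuous_on_vec_lambda)
  fix i :: "'m option"
  show "continuous_on S (\<lambda>z. case i of None \<Rightarrow> a z | Some j \<Rightarrow> b z $ j)"
    by (cases i) (auto intro!: continuous_intros assms)
qed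

lemma compact_prodset: "compact K1 \<Longrightarrow> compact K2 \<Longrightarrow> compact (prodset K1 K2)"
proof -
  assume "compact K1" "compact K2"
  have "prodset K1 K2 = (\<lambda>p. pt (fst p) (snd p)) ` (K1 \<times> K2)"
    unfolding prodset_def by force
  moreover have "continuous_on (K1 \<times> K2) (\<lambda>p. pt (fst p) (snd p))"
    by (intro continuous_intros)
  ultimately show ?thesis
    using \<open>compact K1\<close> \<open>compact K2\<close> by (metis compact_Times compact_continuous_image)
qed

lemma holo_map_on_pt:
  assumes "a holomorphic_on D" and "holo_map_on phi D"
  shows "holo_map_on (\<lambda>z. pt (a z) (phi z)) D"
  unfolding holo_map_on_def
proof
  fix i :: "'a option"
  show "(\<lambda>z. pt (a z) (phi z) $ i) holomorphic_on D"
    using assms by (cases i) (simp_all add: holo_map_on_def)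
qed

lemma norm_deriv_deriv_le:
  fixes f :: "complex \<Rightarrow> complex"
  assumes "f holomorphic_on U" and "open U" and "cball y s \<subseteq> U" and "s > 0"
    and "\<And>z. z \<in> U \<Longrightarrow> norm (f z) \<le> M"
  shows "norm (deriv (deriv f) y) \<le> 2 * (\<bar>M\<bar> + 1) / s\<^sup>2"
proof -
  have "norm ((deriv ^^ 2) f y) \<le> fact 2 * (\<bar>M\<bar> + 1) / s ^ 2"
  proof (rule Cauchy_higher_deriv_bound)
    show "f holomorphic_on ball y s"
      using assms(1,3) ball_subset_cball holomorphic_on_subset by blast
    show "continuous_on (cball y s) f"
      using assms(1-3) holomorphic_on_imp_continuous_on continuous_on_subset by blast
    show "f z \<in> ball 0 (\<bar>M\<bar> + 1)" if "z \<in> ball y s" for z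
      using assms(3) assms(5)[of z] that ball_subset_cball by fastforce
  qed (use assms(4) in auto)
  then show ?thesis
    by (simp add: numeral_2_eq_2)
qed

lemma holomorphic_first_order_remainder:
  fixes f :: "complex \<Rightarrow> complex"
  assumes holf: "f holomorphic_on ball x0 s"
    and bound: "\<And>y. y \<in> ball x0 s \<Longrightarrow> norm (deriv (deriv f) y) \<le> B" and x: "x \<in> ball x0 s"
  shows "norm (f x - f x0 - deriv f x0 * (x - x0)) \<le> B * norm (x - x0) ^ 2"
proof -
  have "0 < s"
    using x by (metis ball_eq_empty empty_iff not_le)
  have "norm ((deriv ^^ 0) f x - (\<Sum>i\<le>1. (deriv ^^ i) f x0 * (x - x0) ^ i / fact i))
          \<le> B * norm (x - x0) ^ Suc 1 / fact 1"
  proof (rule complex_Taylor[where S = "ball x0 s"])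
    fix i :: nat and y assume "y \<in> ball x0 s" "i \<le> 1"
    moreover have "deriv f holomorphic_on ball x0 s"
      using holf by (rule holomorphic_deriv) simp
    ultimately show "((deriv ^^ i) f has_field_derivative (deriv ^^ Suc i) f y) (at y within ball x0 s)"
      using holf by (auto simp: le_Suc_eq intro!: holomorphic_derivI[of _ "ball x0 s"])
  qed (use bound x \<open>0 < s\<close> in \<open>auto simp: numeral_2_eq_2\<close>)
  then show ?thesis
    by (simp add: algebra_simps power2_eq_square)
qed

lemma uniform_limit_at_if_dist_le:
  assumes "s > 0"
    and "\<And>x w. w \<in> W \<Longrightarrow> 0 < dist x x0 \<Longrightarrow> dist x x0 < s \<Longrightarrow> dist (f x w) (g w) \<le> B * dist x x0"
  shows "uniform_limit W f g (at x0)"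
  unfolding uniform_limit_at_iff
proof (intro allI impI)
  fix e :: real assume "e > 0"
  define d where "d = min s (e / (\<bar>B\<bar> + 1))"
  have "dist (f x w) (g w) < e" if "w \<in> W" "0 < dist x x0" "dist x x0 < d" for x w
  proof -
    have "dist (f x w) (g w) \<le> \<bar>B\<bar> * dist x x0"
      using assms(2)[of w x] that by (auto simp: d_def intro: order_trans)
    also have "\<dots> \<le> \<bar>B\<bar> * (e / (\<bar>B\<bar> + 1))"
      using that by (intro mult_left_mono) (auto simp: d_def)
    also have "\<dots> < e"
      using \<open>e > 0\<close> by (simp add: field_simps)
    finally show ?thesis .
  qed
  moreover have "d > 0"
    using \<open>s > 0\<close> \<open>e > 0\<close> by (simp add: d_def)
  ultimately show "\<exists>d>0. \<forall>x. 0 < dist x x0 \<and> dist x x0 < d \<longrightarrow> (\<forall>w\<in>W. dist (f x w) (g w) < e)"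
    by blast
qed

lemma uniform_limit_difference_quotients:
  fixes h :: "'w \<Rightarrow> complex \<Rightarrow> complex"
  assumes "R > 0" and hol: "\<And>w. w \<in> W \<Longrightarrow> h w holomorphic_on ball x0 R"
    and bound: "\<And>w x. w \<in> W \<Longrightarrow> x \<in> ball x0 R \<Longrightarrow> norm (h w x) \<le> M"
  shows "uniform_limit W (\<lambda>x w. (h w x - h w x0) / (x - x0)) (\<lambda>w. deriv (h w) x0) (at x0)"
proof -
  define s where "s = R / 3"
  define B where "B = 2 * (\<bar>M\<bar> + 1) / s\<^sup>2"
  have "s > 0" "ball x0 s \<subseteq> ball x0 R"
    using \<open>R > 0\<close> by (auto simp: s_def)
  have deriv2: "norm (deriv (deriv (h w)) y) \<le> B" if "w \<in> W" "y \<in> ball x0 s" for w y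
  proof -
    have "cball y s \<subseteq> ball x0 R"
    proof
      fix z assume "z \<in> cball y s"
      then show "z \<in> ball x0 R"
        using that(2) \<open>R > 0\<close> dist_triangle[of x0 z y] by (auto simp: s_def dist_commute)
    qed
    then show ?thesis
      unfolding B_def using \<open>s > 0\<close> hol bound that(1) by (intro norm_deriv_deriv_le) auto
  qed
  show ?thesis
  proof (rule uniform_limit_at_if_dist_le[OF \<open>s > 0\<close>])
    fix x w assume w: "w \<in> W" and x: "0 < dist x x0" "dist x x0 < s"
    have "dist ((h w x - h w x0) / (x - x0)) (deriv (h w) x0)
            = norm (h w x - h w x0 - deriv (h w) x0 * (x - x0)) / norm (x - x0)"
      using x by (simp add: dist_norm norm_divide [symmetric] field_simps)
    also have "\<dots> \<le> B * norm (x - x0) ^ 2 / norm (x - x0)"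
      using x w hol[OF w] deriv2 \<open>ball x0 s \<subseteq> ball x0 R\<close>
      by (intro divide_right_mono holomorphic_first_order_remainder[where s = s])
        (auto simp: dist_commute intro: holomorphic_on_subset)
    also have "\<dots> = B * dist x x0"
      using x by (simp add: dist_norm power2_eq_square)
    finally show "dist ((h w x - h w x0) / (x - x0)) (deriv (h w) x0) \<le> B * dist x x0" .
  qed
qed

lemma AD_holomorphic_along:
  assumes "f \<in> AD K" and "r > 0" and "holo_map_on phi (ball c r)" and "inj_on phi (ball c r)"
    and "phi ` ball c r \<subseteq> K"
  shows "(\<lambda>z. f (phi z)) holomorphic_on ball c r"
  using assms unfolding AD_def by (auto simp: o_def)

lemma ADI:
  assumes "continuous_on K f"
    and "\<And>c r phi. r > 0 \<Longrightarrow> holo_map_on phi (ball c r) \<Longrightarrow> inj_on phi (ball c r)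
           \<Longrightarrow> phi ` ball c r \<subseteq> K \<Longrightarrow> (\<lambda>z. f (phi z)) holomorphic_on ball c r"
  shows "f \<in> AD K"
  using assms unfolding AD_def by (simp add: o_def)

lemma AD_diff_divide:
  assumes "f \<in> AD K" and "g \<in> AD K"
  shows "(\<lambda>w. (f w - g w) / c) \<in> AD K"
proof (rule ADI)
  show "continuous_on K (\<lambda>w. (f w - g w) / c)"
    using assms unfolding AD_def divide_inverse by (auto intro!: continuous_intros)
next
  fix c' r phi
  assume "r > 0" "holo_map_on phi (ball c' r)" "inj_on phi (ball c' r)" "phi ` ball c' r \<subseteq> K"
  then show "(\<lambda>z. (f (phi z) - g (phi z)) / c) holomorphic_on ball c' r"
    using AD_holomorphic_along[OF assms(1)] AD_holomorphic_along[OF assms(2)]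
    unfolding divide_inverse by (auto intro!: holomorphic_intros)
qed

lemma AD_uniform_limit:
  assumes AD: "\<forall>\<^sub>F n in F. f n \<in> AD K" and lim: "uniform_limit K f g F" and F: "F \<noteq> bot"
  shows "g \<in> AD K"
proof (rule ADI)
  show "continuous_on K g"
    using uniform_limit_theorem[OF eventually_mono[OF AD] lim] F by (auto simp: AD_def)
next
  fix c r phi
  assume r: "r > 0" and phi: "holo_map_on phi (ball c r)" "inj_on phi (ball c r)"
    and im: "phi ` ball c r \<subseteq> K"
  have "(\<lambda>z. g (phi z)) analytic_on ball c r"
    unfolding analytic_on_def
  proof
    fix z assume "z \<in> ball c r"
    then obtain d where d: "d > 0" "cball z d \<subseteq> ball c r"
      by (meson open_ball open_contains_cball)
    have "phi \<in> cball z d \<rightarrow> K"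
      using d(2) im by auto
    then have lim_z: "uniform_limit (cball z d) (\<lambda>n z. f n (phi z)) (\<lambda>z. g (phi z)) F"
      by (rule uniform_limit_compose'[OF lim])
    have "\<forall>\<^sub>F n in F. continuous_on (cball z d) (\<lambda>z. f n (phi z))
                                \<and> (\<lambda>z. f n (phi z)) holomorphic_on ball z d"
    proof (rule eventually_mono[OF AD])
      fix n assume "f n \<in> AD K"
      then have hol: "(\<lambda>z. f n (phi z)) holomorphic_on ball c r"
        using r phi im by (rule AD_holomorphic_along)
      show "continuous_on (cball z d) (\<lambda>z. f n (phi z)) \<and> (\<lambda>z. f n (phi z)) holomorphic_on ball z d"
      proof
        show "continuous_on (cball z d) (\<lambda>z. f n (phi z))"
          using holomorphic_on_imp_continuous_on[OF hol] d(2) by (rule continuous_on_subset)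
        show "(\<lambda>z. f n (phi z)) holomorphic_on ball z d"
          using hol d(2) ball_subset_cball by (blast intro: holomorphic_on_subset)
      qed
    qed
    from holomorphic_uniform_limit[OF this lim_z] F
    have "(\<lambda>z. g (phi z)) holomorphic_on ball z d"
      by (auto simp: trivial_limit_def)
    then show "\<exists>\<epsilon>>0. (\<lambda>z. g (phi z)) holomorphic_on ball z \<epsilon>"
      using d(1) by blast
  qed
  then show "(\<lambda>z. g (phi z)) holomorphic_on ball c r"
    by (simp add: analytic_on_open)
qed

lemma AD_slice:
  assumes F: "F \<in> AD (prodset K1 K2)" and x: "x \<in> K1"
  shows "(\<lambda>w. F (pt x w)) \<in> AD K2"
proof (rule ADI)
  have "continuous_on K2 (pt x)"
    by (intro continuous_intros)
  moreover have "pt x ` K2 \<subseteq> prodset K1 K2"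
    using x by blast
  ultimately show "continuous_on K2 (\<lambda>w. F (pt x w))"
    using F continuous_on_compose2 unfolding AD_def by blast
next
  fix c r phi
  assume "r > 0" "holo_map_on phi (ball c r)" "inj_on phi (ball c r)" "phi ` ball c r \<subseteq> K2"
  moreover from this have "inj_on (\<lambda>z. pt x (phi z)) (ball c r)"
    by (auto simp: inj_on_def)
  ultimately show "(\<lambda>z. F (pt x (phi z))) holomorphic_on ball c r"
    using x by (intro AD_holomorphic_along[OF F] holo_map_on_pt) auto
qed

lemma holomorphic_on_fibre:
  assumes F: "F \<in> AD (prodset K1 K2)" and "ball x0 R \<subseteq> K1" and "w \<in> K2"
  shows "(\<lambda>x. F (pt x w)) holomorphic_on ball x0 R"
proof (cases "R > 0")
  case True
  have "holo_map_on (\<lambda>_. w) (ball x0 R)"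
    by (simp add: holo_map_on_def)
  moreover have "inj_on (\<lambda>x. pt x w) (ball x0 R)"
    by (simp add: inj_on_def)
  ultimately show ?thesis
    using True assms by (intro AD_holomorphic_along[OF F] holo_map_on_pt) auto
qed (simp add: ball_empty holomorphic_on_empty)

lemma uniform_limit_slices:
  assumes "compact K1" and "compact K2" and "continuous_on (prodset K1 K2) F" and "x0 \<in> K1"
  shows "uniform_limit K2 (\<lambda>x w. F (pt x w)) (\<lambda>w. F (pt x0 w)) (at x0 within K1)"
proof (rule uniform_limitI)
  fix e :: real assume "e > 0"
  moreover have "uniformly_continuous_on (prodset K1 K2) F"
    using assms by (intro compact_uniformly_continuous compact_prodset)
  ultimately obtain d where "d > 0" and d: "\<And>p q. p \<in> prodset K1 K2 \<Longrightarrow> q \<in> prodset K1 K2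
      \<Longrightarrow> dist q p < d \<Longrightarrow> dist (F q) (F p) < e"
    unfolding uniformly_continuous_on_def by metis
  show "\<forall>\<^sub>F x in at x0 within K1. \<forall>w\<in>K2. dist (F (pt x w)) (F (pt x0 w)) < e"
    unfolding eventually_at using \<open>d > 0\<close> \<open>x0 \<in> K1\<close>
    by (auto intro!: exI[of _ d] d simp: dist_pt_same_fibre)
qed

lemma uniform_limit_slice_difference_quotients:
  assumes "compact K1" and "compact K2" and F: "F \<in> AD (prodset K1 K2)" and x0: "x0 \<in> interior K1"
  shows "\<exists>g\<in>AD K2. uniform_limit K2 (\<lambda>x w. (F (pt x w) - F (pt x0 w)) / (x - x0)) g (at x0)"
proof -
  obtain R where "R > 0" and R: "ball x0 R \<subseteq> K1"
    using x0 by (meson mem_interior)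
  have "bounded (F ` prodset K1 K2)"
    using assms F by (intro compact_imp_bounded compact_continuous_image compact_prodset)
      (auto simp: AD_def)
  then obtain M where M: "\<And>p. p \<in> prodset K1 K2 \<Longrightarrow> norm (F p) \<le> M"
    by (meson bounded_iff imageI)
  define g where "g w = deriv (\<lambda>x. F (pt x w)) x0" for w
  have lim: "uniform_limit K2 (\<lambda>x w. (F (pt x w) - F (pt x0 w)) / (x - x0)) g (at x0)"
    unfolding g_def using \<open>R > 0\<close> R holomorphic_on_fibre[OF F R] M
    by (intro uniform_limit_difference_quotients) blast+
  have "\<forall>\<^sub>F x in at x0. x \<in> interior K1 - {x0}"
    using x0 by (intro eventually_at_in_open) auto
  then have "\<forall>\<^sub>F x in at x0. (\<lambda>w. (F (pt x w) - F (pt x0 w)) / (x - x0)) \<in> AD K2"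
    by eventually_elim (use x0 interior_subset in \<open>auto intro!: AD_diff_divide AD_slice[OF F]\<close>)
  then have "g \<in> AD K2"
    by (rule AD_uniform_limit[OF _ lim]) simp
  with lim show ?thesis
    by blast
qed

theorem mainTheorem12:
  fixes K1 :: "complex set" and K2 :: "(complex^'m) set"
    and F :: "complex^('m option) \<Rightarrow> complex"
  assumes "compact K1" and "compact K2"
    and "F \<in> AD (prodset K1 K2)"
  shows "(\<forall>x\<in>K1. (\<lambda>w. F (pt x w)) \<in> AD K2)
    \<and> (\<forall>x0\<in>K1. uniform_limit K2 (\<lambda>x w. F (pt x w)) (\<lambda>w. F (pt x0 w)) (at x0 within K1))
    \<and> (\<forall>x0\<in>interior K1. \<exists>g\<in>AD K2.
          uniform_limit K2 (\<lambda>x w. (F (pt x w) - F (pt x0 w)) / (x - x0)) g (at x0))"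
proof (intro conjI ballI)
  show "(\<lambda>w. F (pt x w)) \<in> AD K2" if "x \<in> K1" for x
    using AD_slice[OF assms(3) that] .
  show "uniform_limit K2 (\<lambda>x w. F (pt x w)) (\<lambda>w. F (pt x0 w)) (at x0 within K1)" if "x0 \<in> K1" for x0
    using assms that by (intro uniform_limit_slices) (auto simp: AD_def)
  show "\<exists>g\<in>AD K2. uniform_limit K2 (\<lambda>x w. (F (pt x w) - F (pt x0 w)) / (x - x0)) g (at x0)"
    if "x0 \<in> interior K1" for x0
    using assms that by (rule uniform_limit_slice_difference_quotients)
qed

end
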